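(* Let $b\ge1$ and let $f\in\mathcal{M}^b$ be not identically $0$, with set-array representation $(A_1,A_2,\ldots,A_b)$ (so $A_1\neq\emptyset$). Let $f^*\in\mathcal{M}^b$ be the multiset with set-array representation $(A_1,\emptyset,\ldots,\emptyset)$. Then $d(f^* )\ge d(f)$, and the inequality is strict if $A_2\neq\emptyset$.
   Context: $\mathcal{M}^b$ is the set of finitely supported functions $f:\mathbb{N}\to\{0,\ldots,b\}$, $\mathbb{N}=\{0,1,\ldots\}$. The set-array representation of $f$ is $(A_1,\ldots,A_b)$ with $A_i=\{a:f(a)\ge i\}$. Multiset addition is coordinatewise on set arrays, $(A_i)_i+(B_i)_i=(A_i+B_i)_i$, where $S+T=\{s+t:s\in S,t\in T\}$ and $S+\emptyset=\emptyset$. $g\in\mathcal{M}^b$ is a divisor of $f$ if $f=g+h$ for some $h\in\mathcal{M}^b$; $d(f)$ is the number of divisors of $f$. *)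

theory Defs
  imports Main
begin

definition Mb :: "nat \<Rightarrow> (nat \<Rightarrow> nat) set" where
  "Mb b = {f. (\<forall>a. f a \<le> b) \<and> finite {a. f a \<noteq> 0}}"

definition setarr :: "(nat \<Rightarrow> nat) \<Rightarrow> nat \<Rightarrow> nat set" where
  "setarr f i = {a. i \<le> f a}"

definition sumset :: "nat set \<Rightarrow> nat set \<Rightarrow> nat set" where
  "sumset S T = {s + t | s t. s \<in> S \<and> t \<in> T}"

text \<open>g is a divisor of f in M^b: f = g + h for some h in M^b, addition being
  coordinatewise sumset addition of the set arrays (A_1,...,A_b).\<close>
definition divisor :: "nat \<Rightarrow> (nat \<Rightarrow> nat) \<Rightarrow> (nat \<Rightarrow> nat) \<Rightarrow> bool" where
  "divisor b g f \<longleftrightarrow> g \<in> Mb b \<and>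
     (\<exists>h \<in> Mb b. \<forall>i \<in> {1..b}. setarr f i = sumset (setarr g i) (setarr h i))"

definition num_divisors :: "nat \<Rightarrow> (nat \<Rightarrow> nat) \<Rightarrow> nat" where
  "num_divisors b f = card {g. divisor b g f}"

definition fstar :: "(nat \<Rightarrow> nat) \<Rightarrow> nat \<Rightarrow> nat" where
  "fstar f a = (if a \<in> setarr f 1 then 1 else 0)"

end

theory Submission
  imports Defs
begin

text \<open>If \<open>f = g + h\<close>, then truncating both \<open>f\<close> and the cofactor \<open>h\<close> to their first
  layers gives \<open>f\<^sup>* = g + h\<^sup>*\<close>, since the higher layers of \<open>f\<^sup>*\<close> and \<open>h\<^sup>*\<close> are empty and
  a sumset with an empty set is empty. So every divisor of \<open>f\<close> divides \<open>f\<^sup>*\<close>. All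
  divisors of \<open>f\<^sup>*\<close> are supported below \<open>max A\<^sub>1\<close>, so there are finitely many. If
  \<open>A\<^sub>2 \<noteq> {}\<close>, then \<open>f\<^sup>*\<close> divides itself (the cofactor is the multiset with all layers
  equal to \<open>{0}\<close>) but not \<open>f\<close>, because its second layer is empty.\<close>

lemma setarr_fstar_1: "setarr (fstar f) 1 = setarr f 1"
  by (auto simp: setarr_def fstar_def)

lemma setarr_fstar_ge2 [simp]: "2 \<le> i \<Longrightarrow> setarr (fstar f) i = {}"
  by (auto simp: setarr_def fstar_def)

lemma sumset_empty_left [simp]: "sumset {} T = {}"
  and sumset_empty_right [simp]: "sumset S {} = {}"
  by (auto simp: sumset_def)

lemma sumset_singleton_0: "sumset S {0} = S"
  by (auto simp: sumset_def)

lemma finite_setarr_1: "f \<in> Mb b \<Longrightarrow> finite (setarr f 1)"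
  by (auto simp: Mb_def setarr_def elim: rev_finite_subset)

lemma fstar_in_Mb:
  assumes "f \<in> Mb b"
  shows "fstar f \<in> Mb b"
proof -
  have "fstar f a \<le> b" for a
  proof -
    have "f a \<le> b"
      using assms by (simp add: Mb_def)
    then show ?thesis
      by (simp add: fstar_def setarr_def)
  qed
  moreover have "{a. fstar f a \<noteq> 0} = {a. f a \<noteq> 0}"
    by (auto simp: fstar_def setarr_def)
  ultimately show ?thesis
    using assms by (simp add: Mb_def)
qed

lemma divisor_imp_divisor_fstar:
  assumes "divisor b g f"
  shows "divisor b g (fstar f)"
proof -
  from assms obtain h where g: "g \<in> Mb b" and h: "h \<in> Mb b"
    and layers: "\<forall>i \<in> {1..b}. setarr f i = sumset (setarr g i) (setarr h i)"
    unfolding divisor_def by blast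
  have "setarr (fstar f) i = sumset (setarr g i) (setarr (fstar h) i)" if "i \<in> {1..b}" for i
  proof (cases "i = 1")
    case True
    with layers that have "setarr f 1 = sumset (setarr g 1) (setarr h 1)"
      by blast
    with True show ?thesis
      by (simp only: setarr_fstar_1)
  next
    case False
    with that show ?thesis by simp
  qed
  with g fstar_in_Mb[OF h] show ?thesis
    unfolding divisor_def by blast
qed

lemma divisor_refl:
  assumes "1 \<le> b" and "f \<in> Mb b"
  shows "divisor b f f"
proof -
  define e :: "nat \<Rightarrow> nat" where "e = (\<lambda>a. if a = 0 then b else 0)"
  have "{a. e a \<noteq> 0} \<subseteq> {0}"
    by (auto simp: e_def)
  then have "e \<in> Mb b"
    by (auto simp: Mb_def e_def elim: finite_subset)
  moreover have "setarr e i = {0}" if "i \<in> {1..b}" for i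
    using that by (auto simp: setarr_def e_def)
  ultimately show ?thesis
    using assms(2) unfolding divisor_def by (metis sumset_singleton_0)
qed

lemma divisor_setarr_empty:
  assumes "divisor b g f" and "i \<in> {1..b}" and "setarr g i = {}"
  shows "setarr f i = {}"
  using assms unfolding divisor_def by auto

lemma divisor_setarr_1_le_Max:
  assumes "divisor b g f" and "f \<in> Mb b" and "setarr f 1 \<noteq> {}" and "x \<in> setarr g 1"
  shows "x \<le> Max (setarr f 1)"
proof -
  from assms(1) obtain h where g: "g \<in> Mb b"
    and layers: "\<forall>i \<in> {1..b}. setarr f i = sumset (setarr g i) (setarr h i)"
    unfolding divisor_def by blast
  have "1 \<le> b"
    using g assms(4) by (auto simp: Mb_def setarr_def intro: order_trans)
  with layers have f1: "setarr f 1 = sumset (setarr g 1) (setarr h 1)"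
    by auto
  with assms(3) obtain t where "t \<in> setarr h 1"
    by (auto simp: sumset_def)
  with f1 assms(4) have "x + t \<in> setarr f 1"
    by (auto simp: sumset_def)
  then show ?thesis
    using finite_setarr_1[OF assms(2)] by (meson Max_ge le_add1 order_trans)
qed

lemma finite_divisors:
  assumes "f \<in> Mb b" and "setarr f 1 \<noteq> {}"
  shows "finite {g. divisor b g f}"
proof -
  define M where "M = Max (setarr f 1)"
  have "{g. divisor b g f} \<subseteq>
      {g. \<forall>x. (x \<in> {0..M} \<longrightarrow> g x \<in> {0..b}) \<and> (x \<notin> {0..M} \<longrightarrow> g x = 0)}"
  proof safe
    fix g x
    assume g: "divisor b g f"
    then show "g x \<in> {0..b}"
      by (auto simp: divisor_def Mb_def)
    show "g x = 0" if "x \<notin> {0..M}"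
    proof (rule ccontr)
      assume "g x \<noteq> 0"
      then have "x \<in> setarr g 1"
        by (simp add: setarr_def)
      with g assms have "x \<le> M"
        unfolding M_def by (rule divisor_setarr_1_le_Max)
      with that show False by simp
    qed
  qed
  then show ?thesis
    by (rule finite_subset) (rule finite_set_of_finite_funs; simp)
qed

theorem mainTheorem18:
  fixes b :: nat and f :: "nat \<Rightarrow> nat"
  assumes "b \<ge> 1" and "f \<in> Mb b" and "f \<noteq> (\<lambda>_. 0)"
  shows "num_divisors b (fstar f) \<ge> num_divisors b f \<and>
         (setarr f 2 \<noteq> {} \<longrightarrow> num_divisors b (fstar f) > num_divisors b f)"
proof -
  from assms(3) obtain a where "f a \<noteq> 0"
    by auto
  then have "a \<in> setarr (fstar f) 1"
    by (simp add: setarr_def fstar_def)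
  then have "setarr (fstar f) 1 \<noteq> {}"
    by blast
  then have fin: "finite {g. divisor b g (fstar f)}"
    using finite_divisors fstar_in_Mb[OF assms(2)] by blast
  have sub: "{g. divisor b g f} \<subseteq> {g. divisor b g (fstar f)}"
    using divisor_imp_divisor_fstar by blast
  moreover have "{g. divisor b g f} \<noteq> {g. divisor b g (fstar f)}" if "setarr f 2 \<noteq> {}"
  proof -
    have "2 \<in> {1..b}"
      using that assms(2) by (auto simp: setarr_def Mb_def intro: order_trans)
    then have "\<not> divisor b (fstar f) f"
      using that divisor_setarr_empty by fastforce
    moreover have "divisor b (fstar f) (fstar f)"
      by (rule divisor_refl[OF assms(1) fstar_in_Mb[OF assms(2)]])
    ultimately show ?thesis by blast
  qed
  ultimately show ?thesis
    unfolding num_divisors_def using fin by (meson card_mono psubsetI psubset_card_mono)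
qed

end
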